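(* Let $L>0$, $T>0$, $K,M$ positive integers, $\Delta x=L/K$, $\Delta t=T/M$. Let $(E,N,V)$ be a sufficiently smooth solution of the periodic Zakharov system $\mathrm{i}E_t+E_{xx}=NE$, $N_t=V_{xx}$, $V_t=N+|E|^2$, $V(0,0)=0$ ($L$-periodic in $x$, $\int_0^LN_t(0,x)\,\mathrm{d}x=0$), and let $(E^{(m)},N^{(m)},V^{(m)})$, $m=0,\dots,M$, solve the DVDM scheme $$\begin{cases}\mathrm{i}\,\delta_t^+E^{(m)}_k=-\delta_x^{\langle 2\rangle}\mu_t^+E^{(m)}_k+(\mu_t^+N^{(m)}_k)(\mu_t^+E^{(m)}_k),\\ \delta_t^+N^{(m)}_k=\delta_x^{\langle 2\rangle}\mu_t^+V^{(m)}_k,\\ \delta_t^+V^{(m)}_k=\mu_t^+N^{(m)}_k+\mu_t^+|E^{(m)}_k|^2,\end{cases}$$ with $E^{(0)}_k=E(0,k\Delta x)$, $N^{(0)}_k=N(0,k\Delta x)$, $|V^{(0)}_k-V(0,k\Delta x)|\le C_V(\Delta x)^2$ ($C_V$ independent of $\Delta x$), and let $\Delta x$ be sufficiently small. Define $A^{(m)}:=\langle e_N^{(m)}+\tilde N^{(m)},|e_E^{(m)}|^2\rangle+2\,\mathrm{Re}\langle e_E^{(m)},\tilde E^{(m)}e_N^{(m)}\rangle$. Then for $m=0,\dots,M$, $$|A^{(m)}|\le\tfrac32\|e_N^{(m)}\|^2+C_4\|e_E^{(m)}\|^2$$ for a constant $C_4>0$ not depending on $\Delta t$ and $\Delta x$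.
   Context: Grid functions are $K$-periodic in $k$. Operators: $\delta_x^{\langle 2\rangle}u_k=(u_{k+1}-2u_k+u_{k-1})/(\Delta x)^2$, $\delta_t^+u^{(m)}=(u^{(m+1)}-u^{(m)})/\Delta t$, $\mu_t^+u^{(m)}=(u^{(m+1)}+u^{(m)})/2$. Inner product $\langle v,w\rangle=\sum_{k=1}^Kv_k\bar w_k\Delta x$, norm $\|v\|=\langle v,v\rangle^{1/2}$. Products and $|\cdot|^2$ of grid functions are componentwise. $\tilde E^{(m)}_k=E(m\Delta t,k\Delta x)$, $\tilde N^{(m)}_k=N(m\Delta t,k\Delta x)$; $e_E^{(m)}=E^{(m)}-\tilde E^{(m)}$, $e_N^{(m)}=N^{(m)}-\tilde N^{(m)}$. *)

theory Defs
  imports "HOL-Analysis.Analysis"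
begin

primrec Ck :: "nat \<Rightarrow> (real \<times> real \<Rightarrow> 'b::real_normed_vector) \<Rightarrow> bool" where
  "Ck 0 f = continuous_on UNIV f"
| "Ck (Suc k) f = (\<exists>D. (\<forall>z. (f has_derivative D z) (at z))
                      \<and> Ck k (\<lambda>z. D z (1, 0)) \<and> Ck k (\<lambda>z. D z (0, 1)))"

definition smooth2 :: "(real \<Rightarrow> real \<Rightarrow> 'b::real_normed_vector) \<Rightarrow> bool" where
  "smooth2 f = (\<forall>k. Ck k (\<lambda>(t, x). f t x))"

definition pdt :: "(real \<Rightarrow> real \<Rightarrow> 'b::real_normed_vector) \<Rightarrow> real \<Rightarrow> real \<Rightarrow> 'b" where
  "pdt f t x = vector_derivative (\<lambda>s. f s x) (at t)"

definition pdx :: "(real \<Rightarrow> real \<Rightarrow> 'b::real_normed_vector) \<Rightarrow> real \<Rightarrow> real \<Rightarrow> 'b" where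
  "pdx f t x = vector_derivative (\<lambda>y. f t y) (at x)"

definition d2x :: "real \<Rightarrow> (int \<Rightarrow> 'a::real_vector) \<Rightarrow> int \<Rightarrow> 'a" where
  "d2x h u k = (1 / h\<^sup>2) *\<^sub>R (u (k + 1) - 2 *\<^sub>R u k + u (k - 1))"

definition gip :: "real \<Rightarrow> nat \<Rightarrow> (int \<Rightarrow> complex) \<Rightarrow> (int \<Rightarrow> complex) \<Rightarrow> complex" where
  "gip h K v w = (\<Sum>k = 1..int K. v k * cnj (w k)) * complex_of_real h"

definition gnorm :: "real \<Rightarrow> nat \<Rightarrow> (int \<Rightarrow> complex) \<Rightarrow> real" where
  "gnorm h K v = sqrt (Re (gip h K v v))"

definition periodic_grid :: "nat \<Rightarrow> (int \<Rightarrow> 'a) \<Rightarrow> bool" where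
  "periodic_grid K u = (\<forall>k. u (k + int K) = u k)"

definition dvdm_step :: "real \<Rightarrow> real \<Rightarrow> (int \<Rightarrow> complex) \<Rightarrow> (int \<Rightarrow> real) \<Rightarrow> (int \<Rightarrow> real)
    \<Rightarrow> (int \<Rightarrow> complex) \<Rightarrow> (int \<Rightarrow> real) \<Rightarrow> (int \<Rightarrow> real) \<Rightarrow> bool" where
  "dvdm_step h dt E0 N0 V0 E1 N1 V1 =
    (\<forall>k.
      \<i> * ((E1 k - E0 k) / complex_of_real dt)
        = - d2x h (\<lambda>j. (E1 j + E0 j) / 2) k
          + complex_of_real ((N1 k + N0 k) / 2) * ((E1 k + E0 k) / 2)
    \<and> (N1 k - N0 k) / dt = d2x h (\<lambda>j. (V1 j + V0 j) / 2) k
    \<and> (V1 k - V0 k) / dt = (N1 k + N0 k) / 2 + ((cmod (E1 k))\<^sup>2 + (cmod (E0 k))\<^sup>2) / 2)"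

definition Aq :: "real \<Rightarrow> nat \<Rightarrow> (int \<Rightarrow> complex) \<Rightarrow> (int \<Rightarrow> real) \<Rightarrow> (int \<Rightarrow> complex) \<Rightarrow> (int \<Rightarrow> real) \<Rightarrow> complex" where
  "Aq h K eE eN tE tN =
     gip h K (\<lambda>k. complex_of_real (eN k + tN k)) (\<lambda>k. complex_of_real ((cmod (eE k))\<^sup>2))
     + complex_of_real (2 * Re (gip h K eE (\<lambda>k. tE k * complex_of_real (eN k))))"

end

(*
  The scheme conserves exactly the discrete mass ||E||^2 and the discrete energy
  ||delta_x^+ E||^2 + <N, |E|^2> + ||N||^2/2 + ||delta_x^+ V||^2/2: testing the equations with
  the right grid functions and summing by parts makes every increment telescope.  A discrete
  Sobolev inequality bounds max_k |E_k|^2 by mass and energy, and at m = 0 both are bounded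
  independently of the mesh because the initial data are samples of smooth functions
  (V^(0) up to C_V dx^2).  Hence E^(m), and with it e_E^(m), is bounded uniformly in m, dt and dx,
  and then |A^(m)| <= sum_k (|e_N| + |tilde N|) |e_E|^2 + 2 |tilde E| |e_E| |e_N| dx splits
  pointwise by Young's inequality.
*)
theory Submission
  imports Defs
begin

section \<open>Summation by parts on periodic grids\<close>

definition dxp :: "real \<Rightarrow> (int \<Rightarrow> 'a::real_vector) \<Rightarrow> int \<Rightarrow> 'a" where
  "dxp h u k = (1 / h) *\<^sub>R (u (k + 1) - u k)"

lemma periodic_grid_map2:
  "periodic_grid K u \<Longrightarrow> periodic_grid K v \<Longrightarrow> periodic_grid K (\<lambda>k. f (u k) (v k))"
  unfolding periodic_grid_def by simp

lemma periodic_grid_shift: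
  assumes "periodic_grid K u"
  shows "periodic_grid K (\<lambda>k. u (k + c))"
  unfolding periodic_grid_def
proof
  fix k
  have "u (k + c + int K) = u (k + c)"
    using assms unfolding periodic_grid_def by blast
  then show "u (k + int K + c) = u (k + c)"
    by (simp add: ac_simps)
qed

lemma periodic_grid_dxp: "periodic_grid K u \<Longrightarrow> periodic_grid K (dxp h u)"
  unfolding dxp_def by (rule periodic_grid_map2[OF periodic_grid_shift])

lemma sum_shift_diff_int:
  fixes f :: "int \<Rightarrow> 'a::ab_group_add"
  shows "(\<Sum>k = 1..int n. f (k + 1)) - (\<Sum>k = 1..int n. f k) = f (int n + 1) - f 1"
proof (induction n)
  case (Suc n)
  have "{1..int (Suc n)} = insert (1 + int n) {1..int n}"
    by (auto simp: atLeastAtMostPlus1_int_conv)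
  with Suc show ?case by (simp add: algebra_simps)
qed simp

lemma sum_periodic_grid_shift:
  fixes f :: "int \<Rightarrow> 'a::ab_group_add"
  assumes "periodic_grid K f"
  shows "(\<Sum>k = 1..int K. f (k + 1)) = (\<Sum>k = 1..int K. f k)"
  using sum_shift_diff_int[of f K] assms unfolding periodic_grid_def by (simp add: add.commute)

lemma d2x_eq_dxp_diff:
  "h \<noteq> 0 \<Longrightarrow> d2x h u k = (1 / h) *\<^sub>R (dxp h u k - dxp h u (k - 1))"
  unfolding d2x_def dxp_def by (simp add: power2_eq_square algebra_simps flip: scaleR_add_left)

lemma sum_d2x_inner:
  fixes u w :: "int \<Rightarrow> 'a::real_inner"
  assumes "periodic_grid K u" "periodic_grid K w" "h \<noteq> 0"
  shows "(\<Sum>k = 1..int K. inner (d2x h u k) (w k))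
       = - (\<Sum>k = 1..int K. inner (dxp h u k) (dxp h w k))"
proof -
  have "periodic_grid K (\<lambda>k. dxp h u (k - 1))"
    using periodic_grid_shift[OF periodic_grid_dxp[OF assms(1)], of h "- 1"] by simp
  then have "periodic_grid K (\<lambda>k. inner (dxp h u (k - 1)) (w k))"
    using assms(2) by (rule periodic_grid_map2)
  from sum_periodic_grid_shift[OF this]
  have shift: "(\<Sum>k = 1..int K. inner (dxp h u (k - 1)) (w k))
             = (\<Sum>k = 1..int K. inner (dxp h u k) (w (k + 1)))" by simp
  have "(\<Sum>k = 1..int K. inner (d2x h u k) (w k))
      = (1 / h) * ((\<Sum>k = 1..int K. inner (dxp h u k) (w k))
                 - (\<Sum>k = 1..int K. inner (dxp h u (k - 1)) (w k)))"
    using assms(3)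
    by (simp add: d2x_eq_dxp_diff inner_diff_left sum_subtractf flip: sum_divide_distrib)
  also have "\<dots> = (1 / h) * (\<Sum>k = 1..int K. inner (dxp h u k) (w k - w (k + 1)))"
    by (simp add: shift inner_diff_right sum_subtractf)
  also have "\<dots> = - (\<Sum>k = 1..int K. inner (dxp h u k) (dxp h w k))"
    unfolding sum_distrib_left sum_negf[symmetric] using assms(3)
    by (intro sum.cong) (simp_all add: dxp_def[of h w] inner_diff_right field_simps)
  finally show ?thesis .
qed

lemma dxp_add: "dxp h (\<lambda>j. u j + v j) k = dxp h u k + dxp h v k"
  by (simp add: dxp_def algebra_simps)

lemma dxp_diff: "dxp h (\<lambda>j. u j - v j) k = dxp h u k - dxp h v k"
  by (simp add: dxp_def algebra_simps)

lemma dxp_mult_left: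
  fixes u :: "int \<Rightarrow> 'a::real_algebra"
  shows "dxp h (\<lambda>j. c * u j) k = c * dxp h u k"
  by (simp add: dxp_def algebra_simps)

lemma dxp_divide:
  fixes u :: "int \<Rightarrow> 'a::real_field"
  shows "dxp h (\<lambda>j. u j / c) k = dxp h u k / c"
  by (simp add: dxp_def divide_inverse algebra_simps)

section \<open>Conservation of mass and energy\<close>

lemma inner_diff_quotient_mean:
  "inner ((b - a) / complex_of_real c) ((b + a) / 2) = ((cmod b)\<^sup>2 - (cmod a)\<^sup>2) / (2 * c)"
  unfolding cmod_power2
  by (simp add: inner_complex_def power2_eq_square diff_divide_distrib add_divide_distrib algebra_simps)

lemma inner_diff_mean: "inner (b - a) ((b + a) / 2) = ((cmod b)\<^sup>2 - (cmod a)\<^sup>2) / 2"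
  using inner_diff_quotient_mean[of b a 1] by simp

lemma inner_mult_i_i [simp]: "inner (\<i> * z) (\<i> * w) = inner z w"
  by (simp add: inner_complex_def)

lemma inner_mult_i_right_self [simp]: "inner z (\<i> * z) = 0"
  by (simp add: inner_complex_def)

lemma inner_of_real_mult_left: "inner (complex_of_real r * z) w = r * inner z w"
  by (simp add: inner_complex_def algebra_simps)

definition grid_mass :: "real \<Rightarrow> nat \<Rightarrow> (int \<Rightarrow> complex) \<Rightarrow> real" where
  "grid_mass h K E = h * (\<Sum>k = 1..int K. (cmod (E k))\<^sup>2)"

(* The discrete Hamiltonian from which the DVDM scheme is derived. *)
definition grid_energy ::
    "real \<Rightarrow> nat \<Rightarrow> (int \<Rightarrow> complex) \<Rightarrow> (int \<Rightarrow> real) \<Rightarrow> (int \<Rightarrow> real) \<Rightarrow> real" where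
  "grid_energy h K E N V = h * ((\<Sum>k = 1..int K. (cmod (dxp h E k))\<^sup>2)
     + (\<Sum>k = 1..int K. N k * (cmod (E k))\<^sup>2)
     + (\<Sum>k = 1..int K. (N k)\<^sup>2) / 2 + (\<Sum>k = 1..int K. (dxp h V k)\<^sup>2) / 2)"

lemma dvdm_step_E_eq:
  "dvdm_step h dt E0 N0 V0 E1 N1 V1 \<Longrightarrow>
     \<i> * ((E1 k - E0 k) / complex_of_real dt)
       = - d2x h (\<lambda>j. (E1 j + E0 j) / 2) k
         + complex_of_real ((N1 k + N0 k) / 2) * ((E1 k + E0 k) / 2)"
  unfolding dvdm_step_def by blast

lemma dvdm_step_mass:
  assumes step: "dvdm_step h dt a N0 V0 b N1 V1" and "h \<noteq> 0" "dt \<noteq> 0"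
    and "periodic_grid K a" "periodic_grid K b"
  shows "grid_mass h K b = grid_mass h K a"
proof -
  define mE where "mE = (\<lambda>j. (b j + a j) / 2)"
  define mN where "mN = (\<lambda>j. (N1 j + N0 j) / 2)"
  have scheme: "\<i> * ((b k - a k) / complex_of_real dt) = - d2x h mE k + complex_of_real (mN k) * mE k"
    for k using dvdm_step_E_eq[OF step] unfolding mE_def mN_def .
  \<comment> \<open>Test the E-equation with \<open>\<i> * mE\<close>: after summation by parts its right-hand side is
    real-orthogonal to \<open>\<i> * mE\<close>.\<close>
  have per: "periodic_grid K mE" "periodic_grid K (\<lambda>j. \<i> * mE j)"
    using assms(4,5) unfolding mE_def by (auto intro: periodic_grid_map2)
  have "(\<Sum>k = 1..int K. ((cmod (b k))\<^sup>2 - (cmod (a k))\<^sup>2) / (2 * dt))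
      = (\<Sum>k = 1..int K. inner (\<i> * ((b k - a k) / complex_of_real dt)) (\<i> * mE k))"
    by (simp only: mE_def inner_mult_i_i inner_diff_quotient_mean)
  also have "\<dots> = - (\<Sum>k = 1..int K. inner (d2x h mE k) (\<i> * mE k))"
    unfolding scheme by (simp add: inner_diff_left inner_of_real_mult_left sum_negf)
  also have "\<dots> = (\<Sum>k = 1..int K. inner (dxp h mE k) (\<i> * dxp h mE k))"
    by (simp add: sum_d2x_inner[OF per assms(2)] dxp_mult_left)
  also have "\<dots> = 0" by simp
  finally show ?thesis
    using assms(3) unfolding grid_mass_def
    by (simp add: sum_subtractf flip: sum_divide_distrib)
qed

lemma dvdm_step_schroedinger_energy:
  assumes step: "dvdm_step h dt a N0 V0 b N1 V1" and "h \<noteq> 0"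
    and per: "periodic_grid K a" "periodic_grid K b"
  shows "(\<Sum>k = 1..int K. (cmod (dxp h b k))\<^sup>2 - (cmod (dxp h a k))\<^sup>2)
    + (\<Sum>k = 1..int K. (N1 k + N0 k) / 2 * ((cmod (b k))\<^sup>2 - (cmod (a k))\<^sup>2)) = 0"
    (is "?X + ?Y = 0")
proof -
  define mE where "mE = (\<lambda>j. (b j + a j) / 2)"
  define mN where "mN = (\<lambda>j. (N1 j + N0 j) / 2)"
  have scheme: "\<i> * ((b k - a k) / complex_of_real dt) = - d2x h mE k + complex_of_real (mN k) * mE k"
    for k using dvdm_step_E_eq[OF step] unfolding mE_def mN_def .
  have mE_diff: "inner (mE k) (b k - a k) = ((cmod (b k))\<^sup>2 - (cmod (a k))\<^sup>2) / 2" for k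
    using inner_diff_mean[of "b k" "a k"] by (simp add: mE_def inner_commute)
  \<comment> \<open>Test the E-equation with \<open>b - a\<close>, to which its left-hand side is real-orthogonal.\<close>
  have "0 = (\<Sum>k = 1..int K. inner (\<i> * ((b k - a k) / complex_of_real dt)) (b k - a k))"
    by (rule sum.neutral[symmetric]) (simp add: inner_complex_def add_divide_distrib[symmetric] algebra_simps)
  also have "\<dots> = (\<Sum>k = 1..int K. - inner (d2x h mE k) (b k - a k)
                                     + mN k * (((cmod (b k))\<^sup>2 - (cmod (a k))\<^sup>2) / 2))"
    by (simp only: scheme inner_add_left inner_minus_left inner_of_real_mult_left mE_diff)
  also have "\<dots> = (\<Sum>k = 1..int K. inner (dxp h mE k) (dxp h b k - dxp h a k)) + ?Y / 2"
  proof -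
    have "periodic_grid K mE" "periodic_grid K (\<lambda>j. b j - a j)"
      using per unfolding mE_def by (auto intro: periodic_grid_map2)
    from sum_d2x_inner[OF this assms(2)]
    have "(\<Sum>k = 1..int K. inner (d2x h mE k) (b k - a k))
        = - (\<Sum>k = 1..int K. inner (dxp h mE k) (dxp h b k - dxp h a k))"
      by (simp add: dxp_diff)
    then show ?thesis
      unfolding mN_def by (simp add: sum_subtractf sum_divide_distrib)
  qed
  also have "\<dots> = ?X / 2 + ?Y / 2"
    unfolding mE_def
    by (simp add: dxp_divide dxp_add inner_commute[of "_ / 2"] inner_diff_mean sum_divide_distrib)
  finally show ?thesis by simp
qed

lemma dvdm_step_wave_energy:
  assumes step: "dvdm_step h dt a N0 V0 b N1 V1" and "h \<noteq> 0" "dt \<noteq> 0"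
    and per: "periodic_grid K V0" "periodic_grid K V1"
  shows "(\<Sum>k = 1..int K. N1 k * (cmod (b k))\<^sup>2 - N0 k * (cmod (a k))\<^sup>2)
      + (\<Sum>k = 1..int K. (N1 k)\<^sup>2 - (N0 k)\<^sup>2) / 2
      + (\<Sum>k = 1..int K. (dxp h V1 k)\<^sup>2 - (dxp h V0 k)\<^sup>2) / 2
    = (\<Sum>k = 1..int K. (N1 k + N0 k) / 2 * ((cmod (b k))\<^sup>2 - (cmod (a k))\<^sup>2))"
proof -
  define mN where "mN = (\<lambda>j. (N1 j + N0 j) / 2)"
  define mV where "mV = (\<lambda>j. (V1 j + V0 j) / 2)"
  define mS where "mS = (\<lambda>j. ((cmod (b j))\<^sup>2 + (cmod (a j))\<^sup>2) / 2)"
  have scheme_N: "N1 k - N0 k = dt * d2x h mV k" for k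
    using step assms(3) unfolding dvdm_step_def mV_def by (simp add: field_simps)
  have scheme_V: "V1 k - V0 k = dt * (mN k + mS k)" for k
    using step assms(3) unfolding dvdm_step_def mN_def mS_def by (simp add: field_simps)
  \<comment> \<open>Test the N-equation with \<open>mN\<close> and the V-equation with \<open>d2x h mV\<close>.\<close>
  have wave_N: "(\<Sum>k = 1..int K. (N1 k)\<^sup>2 - (N0 k)\<^sup>2) = 2 * dt * (\<Sum>k = 1..int K. mN k * d2x h mV k)"
  proof -
    have "(N1 k)\<^sup>2 - (N0 k)\<^sup>2 = 2 * mN k * (N1 k - N0 k)" for k
      unfolding mN_def by (simp add: power2_eq_square algebra_simps)
    then show ?thesis by (simp add: scheme_N sum_distrib_left algebra_simps)
  qed
  have wave_V: "(\<Sum>k = 1..int K. (dxp h V1 k)\<^sup>2 - (dxp h V0 k)\<^sup>2)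
      = - 2 * dt * ((\<Sum>k = 1..int K. mN k * d2x h mV k) + (\<Sum>k = 1..int K. d2x h mV k * mS k))"
  proof -
    have "periodic_grid K mV" "periodic_grid K (\<lambda>j. V1 j - V0 j)"
      using per unfolding mV_def by (auto intro: periodic_grid_map2)
    from sum_d2x_inner[OF this assms(2)]
    have "(\<Sum>k = 1..int K. d2x h mV k * (V1 k - V0 k))
        = - (\<Sum>k = 1..int K. dxp h mV k * (dxp h V1 k - dxp h V0 k))"
      by (simp add: dxp_diff)
    moreover have "(dxp h V1 k)\<^sup>2 - (dxp h V0 k)\<^sup>2 = 2 * (dxp h mV k * (dxp h V1 k - dxp h V0 k))" for k
      unfolding mV_def by (simp add: dxp_divide dxp_add power2_eq_square algebra_simps)
    ultimately have "(\<Sum>k = 1..int K. (dxp h V1 k)\<^sup>2 - (dxp h V0 k)\<^sup>2)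
        = - 2 * (\<Sum>k = 1..int K. d2x h mV k * (V1 k - V0 k))"
      by (simp add: sum_distrib_left sum_negf)
    then show ?thesis
      by (simp add: scheme_V sum_distrib_left sum.distrib algebra_simps)
  qed
  have coupling: "(\<Sum>k = 1..int K. N1 k * (cmod (b k))\<^sup>2 - N0 k * (cmod (a k))\<^sup>2)
      = dt * (\<Sum>k = 1..int K. d2x h mV k * mS k)
        + (\<Sum>k = 1..int K. mN k * ((cmod (b k))\<^sup>2 - (cmod (a k))\<^sup>2))"
  proof -
    have "N1 k * (cmod (b k))\<^sup>2 - N0 k * (cmod (a k))\<^sup>2
        = (N1 k - N0 k) * mS k + mN k * ((cmod (b k))\<^sup>2 - (cmod (a k))\<^sup>2)" for k
      unfolding mS_def mN_def by (simp add: field_simps)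
    then show ?thesis
      unfolding scheme_N sum_distrib_left sum.distrib[symmetric] by (intro sum.cong) simp_all
  qed
  show ?thesis
    unfolding coupling wave_N wave_V by (simp add: mN_def field_simps)
qed

lemma dvdm_step_energy:
  assumes step: "dvdm_step h dt a N0 V0 b N1 V1" and "h \<noteq> 0" "dt \<noteq> 0"
    and "periodic_grid K a" "periodic_grid K b" "periodic_grid K V0" "periodic_grid K V1"
  shows "grid_energy h K b N1 V1 = grid_energy h K a N0 V0"
proof -
  have "(grid_energy h K b N1 V1 - grid_energy h K a N0 V0) / h
      = (\<Sum>k = 1..int K. (cmod (dxp h b k))\<^sup>2 - (cmod (dxp h a k))\<^sup>2)
        + (\<Sum>k = 1..int K. N1 k * (cmod (b k))\<^sup>2 - N0 k * (cmod (a k))\<^sup>2)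
        + (\<Sum>k = 1..int K. (N1 k)\<^sup>2 - (N0 k)\<^sup>2) / 2
        + (\<Sum>k = 1..int K. (dxp h V1 k)\<^sup>2 - (dxp h V0 k)\<^sup>2) / 2"
    unfolding grid_energy_def using assms(2) by (simp add: sum_subtractf field_simps)
  also have "\<dots> = 0"
    using dvdm_step_schroedinger_energy[OF step assms(2,4,5)] dvdm_step_wave_energy[OF step assms(2,3,6,7)]
    by linarith
  finally show ?thesis using assms(2) by simp
qed

lemma dvdm_conserved:
  assumes "h \<noteq> 0" "dt \<noteq> 0"
    and per: "\<forall>m \<le> M. periodic_grid K (En m) \<and> periodic_grid K (Vn m)"
    and step: "\<forall>m < M. dvdm_step h dt (En m) (Nn m) (Vn m) (En (Suc m)) (Nn (Suc m)) (Vn (Suc m))"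
    and "m \<le> M"
  shows "grid_mass h K (En m) = grid_mass h K (En 0)
    \<and> grid_energy h K (En m) (Nn m) (Vn m) = grid_energy h K (En 0) (Nn 0) (Vn 0)"
  using \<open>m \<le> M\<close>
proof (induction m)
  case (Suc m)
  then have "m < M" "m \<le> M" "Suc m \<le> M" by simp_all
  with per step Suc.IH show ?case
    using dvdm_step_mass[OF _ assms(1,2)] dvdm_step_energy[OF _ assms(1,2)] by metis
qed simp

section \<open>A discrete Sobolev inequality\<close>

lemma abs_diff_le_sum_abs_steps:
  fixes f :: "int \<Rightarrow> real"
  assumes "i \<le> j"
  shows "\<bar>f j - f i\<bar> \<le> (\<Sum>l \<in> {i..<j}. \<bar>f (l + 1) - f l\<bar>)"
  using assms
proof (induction j rule: int_ge_induct)
  case (step j)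
  have "{i..<j + 1} = insert j {i..<j}" using step.hyps by auto
  then show ?case using step.IH by simp
qed simp

lemma abs_diff_le_total_variation:
  fixes f :: "int \<Rightarrow> real"
  assumes "i \<in> {1..int K}" "j \<in> {1..int K}"
  shows "\<bar>f j - f i\<bar> \<le> (\<Sum>l = 1..int K. \<bar>f (l + 1) - f l\<bar>)"
proof -
  have bound: "\<bar>f q - f p\<bar> \<le> (\<Sum>l = 1..int K. \<bar>f (l + 1) - f l\<bar>)"
    if "p \<le> q" "p \<in> {1..int K}" "q \<in> {1..int K}" for p q
  proof -
    have "\<bar>f q - f p\<bar> \<le> (\<Sum>l \<in> {p..<q}. \<bar>f (l + 1) - f l\<bar>)"
      using abs_diff_le_sum_abs_steps[OF \<open>p \<le> q\<close>] .
    also have "\<dots> \<le> (\<Sum>l = 1..int K. \<bar>f (l + 1) - f l\<bar>)"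
      using that by (intro sum_mono2) auto
    finally show ?thesis .
  qed
  show ?thesis
  proof (cases "i \<le> j")
    case False
    then show ?thesis using bound[of j i] assms by (simp add: abs_minus_commute)
  qed (use bound assms in blast)
qed

lemma exists_le_mean:
  fixes f :: "int \<Rightarrow> real"
  assumes "K > 0"
  shows "\<exists>i \<in> {1..int K}. real K * f i \<le> (\<Sum>k = 1..int K. f k)"
proof (rule ccontr)
  assume "\<not> ?thesis"
  then have "(\<Sum>i = 1..int K. \<Sum>k = 1..int K. f k) < (\<Sum>i = 1..int K. real K * f i)"
    using assms by (intro sum_strict_mono) (auto simp: not_le)
  then show False by (simp add: sum_distrib_left)
qed

lemma mult_add_le_young:
  fixes d x y e :: real
  assumes "e > 0"
  shows "d * (x + y) \<le> e * d\<^sup>2 + (x\<^sup>2 + y\<^sup>2) / (2 * e)"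
proof -
  have "0 \<le> ((2 * e * d - (x + y))\<^sup>2 + (x - y)\<^sup>2) / (4 * e)"
    using assms by simp
  also have "\<dots> = e * d\<^sup>2 + (x\<^sup>2 + y\<^sup>2) / (2 * e) - d * (x + y)"
    using assms by (simp add: field_simps power2_eq_square)
  finally show ?thesis by simp
qed

lemma norm_sq_step_le:
  fixes E :: "int \<Rightarrow> complex"
  assumes "h > 0" "e > 0"
  shows "\<bar>(cmod (E (l + 1)))\<^sup>2 - (cmod (E l))\<^sup>2\<bar>
    \<le> h * (e * (cmod (dxp h E l))\<^sup>2 + ((cmod (E (l + 1)))\<^sup>2 + (cmod (E l))\<^sup>2) / (2 * e))"
proof -
  let ?x = "cmod (E (l + 1))" and ?y = "cmod (E l)"
  have "?x\<^sup>2 - ?y\<^sup>2 = (?x - ?y) * (?x + ?y)"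
    by (simp add: power2_eq_square algebra_simps)
  then have "\<bar>?x\<^sup>2 - ?y\<^sup>2\<bar> = \<bar>?x - ?y\<bar> * (?x + ?y)"
    by (simp add: abs_mult)
  also have "\<dots> \<le> cmod (E (l + 1) - E l) * (?x + ?y)"
    by (intro mult_right_mono norm_triangle_ineq3) simp
  also have "\<dots> = h * (cmod (dxp h E l) * (?x + ?y))"
    using assms(1) by (simp add: dxp_def)
  also have "\<dots> \<le> h * (e * (cmod (dxp h E l))\<^sup>2 + (?x\<^sup>2 + ?y\<^sup>2) / (2 * e))"
    using assms by (intro mult_left_mono mult_add_le_young) auto
  finally show ?thesis .
qed

lemma grid_norm_sq_le_mean_gradient:
  fixes E :: "int \<Rightarrow> complex"
  assumes "h > 0" "K > 0" "periodic_grid K E" "e > 0" "j \<in> {1..int K}"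
  shows "(cmod (E j))\<^sup>2 \<le> grid_mass h K E / (h * K)
           + e * (h * (\<Sum>k = 1..int K. (cmod (dxp h E k))\<^sup>2)) + grid_mass h K E / e"
proof -
  define f where "f k = (cmod (E k))\<^sup>2" for k
  obtain i where i: "i \<in> {1..int K}" "real K * f i \<le> (\<Sum>k = 1..int K. f k)"
    using exists_le_mean[OF assms(2)] by blast
  have "periodic_grid K f"
    using assms(3) unfolding f_def periodic_grid_def by simp
  have "f j \<le> f i + (\<Sum>l = 1..int K. \<bar>f (l + 1) - f l\<bar>)"
    using abs_diff_le_total_variation[OF i(1) assms(5), of f] by linarith
  also have "\<dots> \<le> (\<Sum>k = 1..int K. f k) / K
      + (\<Sum>l = 1..int K. h * (e * (cmod (dxp h E l))\<^sup>2 + (f (l + 1) + f l) / (2 * e)))"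
    using i(2) assms(2) norm_sq_step_le[OF assms(1,4)] unfolding f_def
    by (intro add_mono sum_mono) (simp_all add: field_simps)
  also have "\<dots> = grid_mass h K E / (h * K)
      + e * (h * (\<Sum>k = 1..int K. (cmod (dxp h E k))\<^sup>2)) + grid_mass h K E / e"
  proof -
    let ?g = "\<lambda>l. (cmod (dxp h E l))\<^sup>2"
    have "(\<Sum>l = 1..int K. h * (e * ?g l + (f (l + 1) + f l) / (2 * e)))
        = e * (h * sum ?g {1..int K}) + h * ((\<Sum>l = 1..int K. f (l + 1)) + sum f {1..int K}) / (2 * e)"
      by (simp add: sum.distrib sum_distrib_left algebra_simps flip: sum_divide_distrib)
    then show ?thesis
      using assms(1,4) sum_periodic_grid_shift[OF \<open>periodic_grid K f\<close>]
      unfolding grid_mass_def f_def[symmetric] by simp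
  qed
  finally show ?thesis unfolding f_def .
qed

lemma grid_energy_ge:
  assumes "h \<ge> 0"
  shows "h * (\<Sum>k = 1..int K. (cmod (dxp h E k))\<^sup>2) - h * (\<Sum>k = 1..int K. ((cmod (E k))\<^sup>2)\<^sup>2) / 2
           \<le> grid_energy h K E N V"
proof -
  have "- ((cmod (E k))\<^sup>2)\<^sup>2 / 2 \<le> N k * (cmod (E k))\<^sup>2 + (N k)\<^sup>2 / 2" for k
    using zero_le_power2[of "N k + (cmod (E k))\<^sup>2"] by (simp add: power2_eq_square algebra_simps)
  then have "(\<Sum>k = 1..int K. - ((cmod (E k))\<^sup>2)\<^sup>2 / 2)
      \<le> (\<Sum>k = 1..int K. N k * (cmod (E k))\<^sup>2 + (N k)\<^sup>2 / 2)"
    by (rule sum_mono)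
  then have "- (\<Sum>k = 1..int K. ((cmod (E k))\<^sup>2)\<^sup>2) / 2
      \<le> (\<Sum>k = 1..int K. N k * (cmod (E k))\<^sup>2) + (\<Sum>k = 1..int K. (N k)\<^sup>2) / 2"
    by (simp add: sum.distrib sum_negf sum_divide_distrib)
  moreover have "0 \<le> (\<Sum>k = 1..int K. (dxp h V k)\<^sup>2)" by (simp add: sum_nonneg)
  ultimately have "(\<Sum>k = 1..int K. (cmod (dxp h E k))\<^sup>2) - (\<Sum>k = 1..int K. ((cmod (E k))\<^sup>2)\<^sup>2) / 2
      \<le> (\<Sum>k = 1..int K. (cmod (dxp h E k))\<^sup>2) + (\<Sum>k = 1..int K. N k * (cmod (E k))\<^sup>2)
         + (\<Sum>k = 1..int K. (N k)\<^sup>2) / 2 + (\<Sum>k = 1..int K. (dxp h V k)\<^sup>2) / 2"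
    by linarith
  from mult_left_mono[OF this assms] show ?thesis
    unfolding grid_energy_def by (simp add: right_diff_distrib)
qed

lemma grid_mass_nonneg: "h \<ge> 0 \<Longrightarrow> 0 \<le> grid_mass h K E"
  unfolding grid_mass_def by (simp add: sum_nonneg)

lemma grid_norm_sq_le_mass_energy:
  fixes E :: "int \<Rightarrow> complex"
  assumes "h > 0" "K > 0" "periodic_grid K E" "j \<in> {1..int K}"
    and mass: "grid_mass h K E \<le> Q" and energy: "grid_energy h K E N V \<le> H"
  shows "(cmod (E j))\<^sup>2 \<le> (Q + Q\<^sup>2) / (h * K) + 2 * H + Q * (Q + 1)\<^sup>2"
proof -
  define L where "L = h * K"
  define P where "P = h * (\<Sum>k = 1..int K. (cmod (dxp h E k))\<^sup>2)"
  \<comment> \<open>\<open>e * Q \<le> 1\<close> lets the quartic part of the energy be absorbed into the gradient term \<open>P\<close>.\<close>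
  define e where "e = 1 / (Q + 1)"
  define B where "B = Q / L + e * P + Q * (Q + 1)"
  have "L > 0" using assms(1,2) by (simp add: L_def)
  have "0 \<le> Q" using grid_mass_nonneg[of h K E] assms(1) mass by linarith
  have "P \<ge> 0" using assms(1) by (simp add: P_def sum_nonneg)
  have "e > 0" "e \<le> 1" "e * Q \<le> 1" using \<open>0 \<le> Q\<close> by (simp_all add: e_def field_simps)
  have pointwise: "(cmod (E k))\<^sup>2 \<le> B" if "k \<in> {1..int K}" for k
  proof -
    have "grid_mass h K E / L \<le> Q / L" "grid_mass h K E / e \<le> Q / e"
      using mass \<open>L > 0\<close> \<open>e > 0\<close> by (simp_all add: divide_right_mono)
    then show ?thesis
      using grid_norm_sq_le_mean_gradient[OF assms(1-3) \<open>e > 0\<close> that]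
      unfolding B_def P_def L_def e_def by simp
  qed
  have "h * (\<Sum>k = 1..int K. ((cmod (E k))\<^sup>2)\<^sup>2) \<le> h * (\<Sum>k = 1..int K. B * (cmod (E k))\<^sup>2)"
  proof (intro mult_left_mono sum_mono)
    fix k assume "k \<in> {1..int K}"
    from mult_right_mono[OF pointwise[OF this] zero_le_power2[of "cmod (E k)"]]
    show "((cmod (E k))\<^sup>2)\<^sup>2 \<le> B * (cmod (E k))\<^sup>2" by (simp add: power2_eq_square)
  qed (use assms(1) in simp)
  also have "\<dots> = B * grid_mass h K E"
    by (simp add: grid_mass_def sum_distrib_left mult.left_commute)
  also have "\<dots> \<le> B * Q"
    using mass \<open>0 \<le> Q\<close> \<open>P \<ge> 0\<close> \<open>e > 0\<close> \<open>L > 0\<close> by (intro mult_left_mono) (simp_all add: B_def)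
  finally have "P - B * Q / 2 \<le> H"
    using grid_energy_ge[where h = h and K = K and E = E and N = N and V = V] assms(1) energy
    unfolding P_def by linarith
  moreover have "e * Q * P \<le> P"
    using \<open>e * Q \<le> 1\<close> \<open>P \<ge> 0\<close> \<open>e > 0\<close> \<open>0 \<le> Q\<close> by (simp add: mult_left_le_one_le)
  ultimately have "P \<le> 2 * H + Q\<^sup>2 / L + Q\<^sup>2 * (Q + 1)"
    unfolding B_def by (simp add: power2_eq_square field_simps)
  moreover have "e * P \<le> P"
    using \<open>e \<le> 1\<close> \<open>P \<ge> 0\<close> \<open>e > 0\<close> by (simp add: mult_left_le_one_le)
  ultimately have "B \<le> (Q + Q\<^sup>2) / L + 2 * H + Q * (Q + 1)\<^sup>2"
    unfolding B_def by (simp add: power2_eq_square add_divide_distrib algebra_simps)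
  with pointwise[OF assms(4)] show ?thesis unfolding L_def by linarith
qed

section \<open>Bounds coming from the smoothness of the exact solution\<close>

lemma smooth2_continuous: "smooth2 F \<Longrightarrow> continuous_on UNIV (\<lambda>(t, x). F t x)"
  unfolding smooth2_def using Ck.simps(1) by blast

lemma continuous_bounded_on_rectangle:
  fixes F :: "real \<Rightarrow> real \<Rightarrow> 'b::real_normed_vector"
  assumes "continuous_on UNIV (\<lambda>(t, x). F t x)"
  shows "\<exists>B > 0. \<forall>t \<in> {a..b}. \<forall>x \<in> {c..d}. norm (F t x) \<le> B"
proof -
  have "compact ((\<lambda>(t, x). F t x) ` ({a..b} \<times> {c..d}))"
    using assms by (intro compact_continuous_image compact_Times) (auto intro: continuous_on_subset)
  then obtain B where "B > 0" "\<forall>y \<in> (\<lambda>(t, x). F t x) ` ({a..b} \<times> {c..d}). norm y \<le> B"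
    by (meson bounded_pos compact_imp_bounded)
  then show ?thesis by auto
qed

lemma smooth2_partial_x:
  fixes F :: "real \<Rightarrow> real \<Rightarrow> 'b::real_normed_vector"
  assumes "smooth2 F"
  obtains Fx where "continuous_on UNIV (\<lambda>(t, x). Fx t x)"
    and "\<And>t x. (F t has_vector_derivative Fx t x) (at x)"
proof -
  have "Ck 1 (\<lambda>(t, x). F t x)" using assms unfolding smooth2_def by blast
  then obtain D where D: "\<And>z. ((\<lambda>(t, x). F t x) has_derivative D z) (at z)"
    and cont: "continuous_on UNIV (\<lambda>z. D z (0, 1))"
    by (auto simp: numeral_eq_Suc)
  have "(F t has_vector_derivative D (t, x) (0, 1)) (at x)" for t x
  proof -
    have "((\<lambda>s. (t, s)) has_derivative (\<lambda>u. (0, u))) (at x)"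
      by (rule has_derivative_Pair[OF has_derivative_const has_derivative_ident, simplified])
    from diff_chain_at[OF this D]
    have "(F t has_derivative (\<lambda>u. D (t, x) (0, u))) (at x)"
      by (simp add: o_def)
    moreover have "(\<lambda>u. D (t, x) (0, u)) = (\<lambda>u. u *\<^sub>R D (t, x) (0, 1))"
    proof
      fix u
      have "D (t, x) (u *\<^sub>R (0, 1)) = u *\<^sub>R D (t, x) (0, 1)"
        by (rule linear_scale[OF has_derivative_linear[OF D]])
      then show "D (t, x) (0, u) = u *\<^sub>R D (t, x) (0, 1)" by simp
    qed
    ultimately show ?thesis
      unfolding has_vector_derivative_def by simp
  qed
  moreover have "continuous_on UNIV (\<lambda>(t, x). D (t, x) (0, 1))"
    using cont by (simp add: case_prod_beta')
  ultimately show ?thesis using that by blast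
qed

lemma smooth2_lipschitz_x:
  fixes F :: "real \<Rightarrow> real \<Rightarrow> 'b::real_normed_vector"
  assumes "smooth2 F"
  shows "\<exists>B. B-lipschitz_on {a..b} (F t)"
proof -
  obtain Fx where cont: "continuous_on UNIV (\<lambda>(t, x). Fx t x)"
    and deriv: "\<And>t x. (F t has_vector_derivative Fx t x) (at x)"
    using smooth2_partial_x[OF assms] by blast
  obtain B where "B > 0" and B: "\<forall>x \<in> {a..b}. norm (Fx t x) \<le> B"
    using continuous_bounded_on_rectangle[OF cont, of t t a b] by auto
  have "dist (F t x) (F t y) \<le> B * dist x y" if "x \<in> {a..b}" "y \<in> {a..b}" for x y
  proof -
    have "norm (F t x - F t y) \<le> B * norm (x - y)"
    proof (rule differentiable_bound[of "{a..b}"])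
      show "(F t has_derivative (\<lambda>u. u *\<^sub>R Fx t s)) (at s within {a..b})" for s
        using deriv[of t s] unfolding has_vector_derivative_def by (rule has_derivative_at_withinI)
      show "onorm (\<lambda>u. u *\<^sub>R Fx t s) \<le> B" if "s \<in> {a..b}" for s
        using B that onorm_scaleR_left[OF bounded_linear_ident, of "Fx t s"] by (simp add: onorm_id)
    qed (use that in auto)
    then show ?thesis by (simp add: dist_norm)
  qed
  then show ?thesis using \<open>B > 0\<close> by (intro exI lipschitz_onI) auto
qed

lemma dxp_norm_le_of_lipschitz:
  fixes F :: "real \<Rightarrow> 'a::real_normed_vector"
  assumes "B-lipschitz_on S F" "h > 0"
    and "real_of_int k * h \<in> S" "real_of_int (k + 1) * h \<in> S"
    and "norm (u k - F (real_of_int k * h)) \<le> \<delta>"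
    and "norm (u (k + 1) - F (real_of_int (k + 1) * h)) \<le> \<delta>"
  shows "norm (dxp h u k) \<le> B + 2 * \<delta> / h"
proof -
  have "norm (F (real_of_int (k + 1) * h) - F (real_of_int k * h)) \<le> B * h"
    using lipschitz_onD[OF assms(1,4,3)] assms(2) by (simp add: dist_norm algebra_simps)
  then have "norm (u (k + 1) - u k) \<le> B * h + 2 * \<delta>"
    using assms(5,6) norm_triangle_ineq4[of "u (k + 1) - F (real_of_int (k + 1) * h)" "u k - F (real_of_int k * h)"]
      norm_triangle_ineq[of "F (real_of_int (k + 1) * h) - F (real_of_int k * h)"
        "(u (k + 1) - F (real_of_int (k + 1) * h)) - (u k - F (real_of_int k * h))"]
    by (simp add: algebra_simps)
  then have "norm (u (k + 1) - u k) / h \<le> (B * h + 2 * \<delta>) / h"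
    using assms(2) by (simp add: divide_right_mono)
  then show ?thesis
    using assms(2) by (simp add: dxp_def add_divide_distrib)
qed

lemma sum_grid_le:
  fixes f :: "int \<Rightarrow> real"
  assumes "\<And>k. k \<in> {1..int K} \<Longrightarrow> f k \<le> c"
  shows "(\<Sum>k = 1..int K. f k) \<le> K * c"
  using sum_bounded_above[of "{1..int K}" f c] assms by simp

lemma grid_mass_le:
  assumes "h \<ge> 0" "\<And>k. k \<in> {1..int K} \<Longrightarrow> cmod (E k) \<le> c"
  shows "grid_mass h K E \<le> h * K * c\<^sup>2"
proof -
  have "(\<Sum>k = 1..int K. (cmod (E k))\<^sup>2) \<le> K * c\<^sup>2"
    using assms(2) by (intro sum_grid_le power_mono) auto
  then show ?thesis
    unfolding grid_mass_def using mult_left_mono[OF _ assms(1)] by (simp add: mult.assoc)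
qed

lemma grid_energy_le:
  assumes "h \<ge> 0"
    and "\<And>k. k \<in> {1..int K} \<Longrightarrow> cmod (dxp h E k) \<le> a"
    and "\<And>k. k \<in> {1..int K} \<Longrightarrow> cmod (E k) \<le> c"
    and "\<And>k. k \<in> {1..int K} \<Longrightarrow> \<bar>N k\<bar> \<le> n"
    and "\<And>k. k \<in> {1..int K} \<Longrightarrow> \<bar>dxp h V k\<bar> \<le> v"
  shows "grid_energy h K E N V \<le> h * K * (a\<^sup>2 + n * c\<^sup>2 + n\<^sup>2 / 2 + v\<^sup>2 / 2)"
proof -
  have "(\<Sum>k = 1..int K. (cmod (dxp h E k))\<^sup>2) \<le> K * a\<^sup>2"
    using assms(2) by (intro sum_grid_le power_mono) auto
  moreover have "(\<Sum>k = 1..int K. N k * (cmod (E k))\<^sup>2) \<le> K * (n * c\<^sup>2)"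
  proof (intro sum_grid_le)
    fix k assume k: "k \<in> {1..int K}"
    have "N k * (cmod (E k))\<^sup>2 \<le> \<bar>N k\<bar> * (cmod (E k))\<^sup>2" by (simp add: mult_right_mono)
    also have "\<dots> \<le> n * c\<^sup>2"
      using assms(3,4)[OF k] by (intro mult_mono power_mono) auto
    finally show "N k * (cmod (E k))\<^sup>2 \<le> n * c\<^sup>2" .
  qed
  moreover have "(\<Sum>k = 1..int K. (N k)\<^sup>2) \<le> K * n\<^sup>2"
    using assms(4) by (intro sum_grid_le) (metis abs_ge_zero power2_abs power_mono)
  moreover have "(\<Sum>k = 1..int K. (dxp h V k)\<^sup>2) \<le> K * v\<^sup>2"
    using assms(5) by (intro sum_grid_le) (metis abs_ge_zero power2_abs power_mono)
  ultimately have "(\<Sum>k = 1..int K. (cmod (dxp h E k))\<^sup>2) + (\<Sum>k = 1..int K. N k * (cmod (E k))\<^sup>2)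
      + (\<Sum>k = 1..int K. (N k)\<^sup>2) / 2 + (\<Sum>k = 1..int K. (dxp h V k)\<^sup>2) / 2
      \<le> K * (a\<^sup>2 + n * c\<^sup>2 + n\<^sup>2 / 2 + v\<^sup>2 / 2)"
    by (simp add: algebra_simps)
  from mult_left_mono[OF this assms(1)] show ?thesis
    unfolding grid_energy_def by (simp add: mult.assoc)
qed

lemma grid_point_mem:
  assumes "K > 0" "L \<ge> 0" "0 \<le> k" "k \<le> c * int K"
  shows "real_of_int k * (L / K) \<in> {0..c * L}"
proof -
  have "real_of_int k \<le> real_of_int (c * int K)"
    using assms(4) by linarith
  then have "real_of_int k * (L / K) \<le> real_of_int (c * int K) * (L / K)"
    using assms(2) by (intro mult_right_mono) auto
  then show ?thesis using assms by auto
qed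

lemma grid_mass_samples_le:
  assumes "K > 0" "L \<ge> 0" "\<forall>x \<in> {0..L}. cmod (F x) \<le> B"
    and "\<forall>k. u k = F (real_of_int k * (L / K))"
  shows "grid_mass (L / K) K u \<le> L * B\<^sup>2"
proof -
  have "cmod (u k) \<le> B" if "k \<in> {1..int K}" for k
    using grid_point_mem[of K L k 1] assms that by simp
  then show ?thesis
    using grid_mass_le[of "L / K" K u B] assms(1,2) by simp
qed

lemma grid_energy_samples_le:
  fixes E0 :: "real \<Rightarrow> complex" and N0 V0 :: "real \<Rightarrow> real"
  assumes "K > 0" "L > 0" "CV \<ge> 0"
    and BE: "BE-lipschitz_on {0..2 * L} E0" and BV: "BV-lipschitz_on {0..2 * L} V0"
    and ME: "\<forall>x \<in> {0..L}. cmod (E0 x) \<le> ME" and MN: "\<forall>x \<in> {0..L}. \<bar>N0 x\<bar> \<le> MN"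
    and u: "\<forall>k. u k = E0 (real_of_int k * (L / K))"
    and w: "\<forall>k. w k = N0 (real_of_int k * (L / K))"
    and v: "\<forall>k. \<bar>v k - V0 (real_of_int k * (L / K))\<bar> \<le> CV * (L / K)\<^sup>2"
  shows "grid_energy (L / K) K u w v \<le> L * (BE\<^sup>2 + MN * ME\<^sup>2 + MN\<^sup>2 / 2 + (BV + 2 * CV * L)\<^sup>2 / 2)"
proof -
  define h where "h = L / K"
  have "h > 0" "h * K = L" "h \<le> L"
    using assms(1,2) by (simp_all add: h_def field_simps)
  have in1: "real_of_int k * h \<in> {0..L}" if "k \<in> {1..int K}" for k
    using grid_point_mem[of K L k 1] assms(1,2) that by (simp add: h_def)
  have in2: "real_of_int k * h \<in> {0..2 * L}" "real_of_int (k + 1) * h \<in> {0..2 * L}"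
    if "k \<in> {1..int K}" for k
    using grid_point_mem[of K L k 2] grid_point_mem[of K L "k + 1" 2] assms(1,2) that
    by (simp_all add: h_def)
  have "cmod (u k) \<le> ME" "\<bar>w k\<bar> \<le> MN" if "k \<in> {1..int K}" for k
    using ME MN in1[OF that] u w by (simp_all add: h_def)
  moreover have "cmod (dxp h u k) \<le> BE" if "k \<in> {1..int K}" for k
    using dxp_norm_le_of_lipschitz[OF BE \<open>h > 0\<close> in2[OF that], of u 0] u by (simp add: h_def)
  moreover have "\<bar>dxp h v k\<bar> \<le> BV + 2 * CV * L" if "k \<in> {1..int K}" for k
  proof -
    have "norm (v j - V0 (real_of_int j * h)) \<le> CV * h\<^sup>2" for j
      using v unfolding h_def real_norm_def by blast
    from dxp_norm_le_of_lipschitz[OF BV \<open>h > 0\<close> in2[OF that] this this]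
    have "\<bar>dxp h v k\<bar> \<le> BV + 2 * (CV * h\<^sup>2) / h" by simp
    also have "\<dots> \<le> BV + 2 * CV * L"
      using \<open>h > 0\<close> \<open>h \<le> L\<close> assms(3) by (simp add: power2_eq_square mult_left_mono)
    finally show ?thesis .
  qed
  ultimately show ?thesis
    using grid_energy_le[of h K u BE ME w MN v "BV + 2 * CV * L"] \<open>h > 0\<close> \<open>h * K = L\<close>
    unfolding h_def by simp
qed

lemma dvdm_solution_bounded:
  assumes "h > 0" "dt > 0" "K > 0"
    and "\<forall>m \<le> M. periodic_grid K (En m) \<and> periodic_grid K (Vn m)"
    and "\<forall>m < M. dvdm_step h dt (En m) (Nn m) (Vn m) (En (Suc m)) (Nn (Suc m)) (Vn (Suc m))"
    and "grid_mass h K (En 0) \<le> Q" "grid_energy h K (En 0) (Nn 0) (Vn 0) \<le> H"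
    and "m \<le> M" "k \<in> {1..int K}"
  shows "(cmod (En m k))\<^sup>2 \<le> (Q + Q\<^sup>2) / (h * K) + 2 * H + Q * (Q + 1)\<^sup>2"
proof -
  have "grid_mass h K (En m) \<le> Q" "grid_energy h K (En m) (Nn m) (Vn m) \<le> H"
    using dvdm_conserved[of h dt M K En Vn Nn m] assms by simp_all
  then show ?thesis
    using grid_norm_sq_le_mass_energy[OF assms(1,3) _ assms(9)] assms(4,8) by blast
qed

lemma gnorm_power2:
  assumes "h \<ge> 0"
  shows "(gnorm h K v)\<^sup>2 = grid_mass h K v"
proof -
  have "v k * cnj (v k) = complex_of_real ((cmod (v k))\<^sup>2)" for k
    by (rule complex_norm_square[symmetric])
  then have "Re (gip h K v v) = grid_mass h K v"
    unfolding gip_def grid_mass_def by (simp add: mult.commute)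
  then show ?thesis
    using grid_mass_nonneg[OF assms] unfolding gnorm_def by simp
qed

lemma cmod_gip_le:
  assumes "h \<ge> 0"
  shows "cmod (gip h K v w) \<le> h * (\<Sum>k = 1..int K. cmod (v k) * cmod (w k))"
proof -
  have "cmod (gip h K v w) = h * cmod (\<Sum>k = 1..int K. v k * cnj (w k))"
    unfolding gip_def using assms by (simp add: norm_mult)
  also have "\<dots> \<le> h * (\<Sum>k = 1..int K. cmod (v k * cnj (w k)))"
    using assms by (intro mult_left_mono norm_sum)
  finally show ?thesis by (simp add: norm_mult)
qed

lemma coupling_term_le:
  fixes a c n t tn ME MN :: real
  assumes "0 \<le> a" "a \<le> c" "0 \<le> t" "t \<le> ME" "\<bar>tn\<bar> \<le> MN"
  shows "\<bar>n + tn\<bar> * a\<^sup>2 + 2 * (a * (t * \<bar>n\<bar>)) \<le> n\<^sup>2 + ((c + 2 * ME)\<^sup>2 / 4 + MN) * a\<^sup>2"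
proof -
  have "\<bar>n + tn\<bar> * a\<^sup>2 \<le> (\<bar>n\<bar> + MN) * a\<^sup>2"
    using assms(5) by (intro mult_right_mono) auto
  moreover have "\<bar>n\<bar> * a\<^sup>2 \<le> \<bar>n\<bar> * a * c"
    using mult_left_mono[OF mult_left_mono[OF assms(2,1)] abs_ge_zero[of n]]
    by (simp add: power2_eq_square mult.assoc)
  moreover have "a * (t * \<bar>n\<bar>) \<le> \<bar>n\<bar> * a * ME"
    using mult_right_mono[OF assms(4), of "a * \<bar>n\<bar>"] assms(1) by (simp add: algebra_simps)
  moreover have "\<bar>n\<bar> * a * (c + 2 * ME) \<le> n\<^sup>2 + (c + 2 * ME)\<^sup>2 / 4 * a\<^sup>2"
    using zero_le_power2[of "\<bar>n\<bar> - a * (c + 2 * ME) / 2"] by (simp add: power2_eq_square algebra_simps)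
  ultimately show ?thesis by (simp add: algebra_simps)
qed

lemma cmod_Aq_le:
  assumes "h \<ge> 0"
    and bounds: "\<And>k. k \<in> {1..int K} \<Longrightarrow> cmod (eE k) \<le> c \<and> cmod (tE k) \<le> ME \<and> \<bar>tN k\<bar> \<le> MN"
  shows "cmod (Aq h K eE eN tE tN)
    \<le> (gnorm h K (\<lambda>k. complex_of_real (eN k)))\<^sup>2 + ((c + 2 * ME)\<^sup>2 / 4 + MN) * (gnorm h K eE)\<^sup>2"
proof -
  let ?C = "(c + 2 * ME)\<^sup>2 / 4 + MN"
  have "cmod (Aq h K eE eN tE tN)
      \<le> cmod (gip h K (\<lambda>k. complex_of_real (eN k + tN k)) (\<lambda>k. complex_of_real ((cmod (eE k))\<^sup>2)))
        + 2 * cmod (gip h K eE (\<lambda>k. tE k * complex_of_real (eN k)))"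
    unfolding Aq_def by (rule order_trans[OF norm_triangle_ineq]) (simp add: abs_Re_le_cmod)
  also have "\<dots> \<le> h * (\<Sum>k = 1..int K. \<bar>eN k + tN k\<bar> * (cmod (eE k))\<^sup>2)
        + 2 * (h * (\<Sum>k = 1..int K. cmod (eE k) * (cmod (tE k) * \<bar>eN k\<bar>)))"
  proof (intro add_mono mult_left_mono)
    show "cmod (gip h K (\<lambda>k. complex_of_real (eN k + tN k)) (\<lambda>k. complex_of_real ((cmod (eE k))\<^sup>2)))
        \<le> h * (\<Sum>k = 1..int K. \<bar>eN k + tN k\<bar> * (cmod (eE k))\<^sup>2)"
      using cmod_gip_le[OF assms(1), of K "\<lambda>k. complex_of_real (eN k + tN k)"
          "\<lambda>k. complex_of_real ((cmod (eE k))\<^sup>2)"]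
      by (simp only: norm_of_real abs_power2)
    show "cmod (gip h K eE (\<lambda>k. tE k * complex_of_real (eN k)))
        \<le> h * (\<Sum>k = 1..int K. cmod (eE k) * (cmod (tE k) * \<bar>eN k\<bar>))"
      using cmod_gip_le[OF assms(1), of K eE "\<lambda>k. tE k * complex_of_real (eN k)"]
      by (simp add: norm_mult)
  qed simp
  also have "\<dots> = h * (\<Sum>k = 1..int K. \<bar>eN k + tN k\<bar> * (cmod (eE k))\<^sup>2
                                      + 2 * (cmod (eE k) * (cmod (tE k) * \<bar>eN k\<bar>)))"
    by (simp add: sum.distrib sum_distrib_left distrib_left mult.left_commute)
  also have "\<dots> \<le> h * (\<Sum>k = 1..int K. (eN k)\<^sup>2 + ?C * (cmod (eE k))\<^sup>2)"
    using assms(1) bounds by (intro mult_left_mono sum_mono coupling_term_le) auto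
  also have "\<dots> = (gnorm h K (\<lambda>k. complex_of_real (eN k)))\<^sup>2 + ?C * (gnorm h K eE)\<^sup>2"
    using assms(1) by (simp add: gnorm_power2 grid_mass_def sum.distrib sum_distrib_left algebra_simps)
  finally show ?thesis .
qed

theorem lemma3p8:
  fixes L T CV :: real
    and E :: "real \<Rightarrow> real \<Rightarrow> complex" and N V :: "real \<Rightarrow> real \<Rightarrow> real"
  assumes "L > 0" and "T > 0" and "CV \<ge> 0"
    and "smooth2 E" and "smooth2 N" and "smooth2 V"
    and "\<And>t x. E t (x + L) = E t x" and "\<And>t x. N t (x + L) = N t x" and "\<And>t x. V t (x + L) = V t x"
    and "\<And>t x. t \<in> {0..T} \<Longrightarrow> \<i> * pdt E t x + pdx (pdx E) t x = complex_of_real (N t x) * E t x"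
    and "\<And>t x. t \<in> {0..T} \<Longrightarrow> pdt N t x = pdx (pdx V) t x"
    and "\<And>t x. t \<in> {0..T} \<Longrightarrow> pdt V t x = N t x + (cmod (E t x))\<^sup>2"
    and "V 0 0 = 0"
    and "integral {0..L} (\<lambda>x. pdt N 0 x) = 0"
  shows "\<exists>C4 > 0. \<exists>h0 > 0. \<forall>(K::nat) (M::nat) (En :: nat \<Rightarrow> int \<Rightarrow> complex) (Nn :: nat \<Rightarrow> int \<Rightarrow> real)
             (Vn :: nat \<Rightarrow> int \<Rightarrow> real).
     K > 0 \<longrightarrow> M > 0 \<longrightarrow> L / real K < h0 \<longrightarrow>
     (\<forall>m \<le> M. periodic_grid K (En m) \<and> periodic_grid K (Nn m) \<and> periodic_grid K (Vn m)) \<longrightarrow>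
     (\<forall>m < M. dvdm_step (L / real K) (T / real M) (En m) (Nn m) (Vn m)
                  (En (Suc m)) (Nn (Suc m)) (Vn (Suc m))) \<longrightarrow>
     (\<forall>k. En 0 k = E 0 (real_of_int k * (L / real K))) \<longrightarrow>
     (\<forall>k. Nn 0 k = N 0 (real_of_int k * (L / real K))) \<longrightarrow>
     (\<forall>k. \<bar>Vn 0 k - V 0 (real_of_int k * (L / real K))\<bar> \<le> CV * (L / real K)\<^sup>2) \<longrightarrow>
     (\<forall>m \<le> M.
        let h = L / real K; dt = T / real M;
            tE = (\<lambda>k. E (real m * dt) (real_of_int k * h));
            tN = (\<lambda>k. N (real m * dt) (real_of_int k * h));
            eE = (\<lambda>k. En m k - tE k);
            eN = (\<lambda>k. Nn m k - tN k)
        in cmod (Aq h K eE eN tE tN)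
             \<le> 3 / 2 * (gnorm h K (\<lambda>k. complex_of_real (eN k)))\<^sup>2 + C4 * (gnorm h K eE)\<^sup>2)"
proof -
  obtain ME where ME: "\<forall>t \<in> {0..T}. \<forall>x \<in> {0..L}. cmod (E t x) \<le> ME"
    using continuous_bounded_on_rectangle[OF smooth2_continuous[OF assms(4)]] by blast
  obtain MN where MN: "\<forall>t \<in> {0..T}. \<forall>x \<in> {0..L}. \<bar>N t x\<bar> \<le> MN" "MN > 0"
    using continuous_bounded_on_rectangle[OF smooth2_continuous[OF assms(5)]] by fastforce
  obtain BE BV where BE: "BE-lipschitz_on {0..2 * L} (E 0)" and BV: "BV-lipschitz_on {0..2 * L} (V 0)"
    using smooth2_lipschitz_x[OF assms(4)] smooth2_lipschitz_x[OF assms(6)] by blast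
  define Q where "Q = L * ME\<^sup>2"
  define H where "H = L * (BE\<^sup>2 + MN * ME\<^sup>2 + MN\<^sup>2 / 2 + (BV + 2 * CV * L)\<^sup>2 / 2)"
  define c where "c = sqrt ((Q + Q\<^sup>2) / L + 2 * H + Q * (Q + 1)\<^sup>2) + ME"
  define C4 where "C4 = (c + 2 * ME)\<^sup>2 / 4 + MN"
  have "C4 > 0" using \<open>MN > 0\<close> by (simp add: C4_def add_nonneg_pos)
  show ?thesis
  proof (intro exI[of _ C4] exI[of _ 1] conjI allI impI \<open>C4 > 0\<close> zero_less_one, unfold Let_def)
    fix K M :: nat and En :: "nat \<Rightarrow> int \<Rightarrow> complex" and Nn Vn :: "nat \<Rightarrow> int \<Rightarrow> real" and m :: nat
    assume "K > 0" "M > 0"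
      and per: "\<forall>m\<le>M. periodic_grid K (En m) \<and> periodic_grid K (Nn m) \<and> periodic_grid K (Vn m)"
      and step: "\<forall>m<M. dvdm_step (L / real K) (T / real M) (En m) (Nn m) (Vn m)
                  (En (Suc m)) (Nn (Suc m)) (Vn (Suc m))"
      and E0: "\<forall>k. En 0 k = E 0 (real_of_int k * (L / real K))"
      and N0: "\<forall>k. Nn 0 k = N 0 (real_of_int k * (L / real K))"
      and V0: "\<forall>k. \<bar>Vn 0 k - V 0 (real_of_int k * (L / real K))\<bar> \<le> CV * (L / real K)\<^sup>2"
      and "m \<le> M"
    define h where "h = L / K"
    define dt where "dt = T / M"
    have "h > 0" "h * K = L" "dt > 0" "real m * dt \<in> {0..T}"
      using \<open>K > 0\<close> \<open>M > 0\<close> \<open>m \<le> M\<close> assms(1,2)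
      by (auto simp: h_def dt_def field_simps mult_left_mono)
    have "grid_mass h K (En 0) \<le> Q" "grid_energy h K (En 0) (Nn 0) (Vn 0) \<le> H"
      using grid_mass_samples_le[OF \<open>K > 0\<close> _ _ E0] grid_energy_samples_le[OF \<open>K > 0\<close> assms(1,3) BE BV _ _ E0 N0 V0]
        ME MN assms(1,2) unfolding Q_def H_def h_def by auto
    with dvdm_solution_bounded[OF \<open>h > 0\<close> \<open>dt > 0\<close> \<open>K > 0\<close>, of M En Vn Nn] per step \<open>m \<le> M\<close>
    have En_bound: "cmod (En m k) \<le> c - ME" if "k \<in> {1..int K}" for k
      using that \<open>h * K = L\<close> unfolding c_def h_def dt_def by (simp add: real_le_rsqrt)
    define tE where "tE = (\<lambda>k. E (real m * dt) (real_of_int k * h))"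
    define tN where "tN = (\<lambda>k. N (real m * dt) (real_of_int k * h))"
    define eE where "eE = (\<lambda>k. En m k - tE k)"
    define eN where "eN = (\<lambda>k. Nn m k - tN k)"
    have "cmod (eE k) \<le> c \<and> cmod (tE k) \<le> ME \<and> \<bar>tN k\<bar> \<le> MN" if "k \<in> {1..int K}" for k
    proof -
      have "real_of_int k * h \<in> {0..L}"
        using grid_point_mem[of K L k 1] \<open>K > 0\<close> assms(1) that by (simp add: h_def)
      then have "cmod (tE k) \<le> ME" "\<bar>tN k\<bar> \<le> MN"
        using ME MN \<open>real m * dt \<in> {0..T}\<close> by (simp_all add: tE_def tN_def)
      moreover have "cmod (eE k) \<le> cmod (En m k) + cmod (tE k)"
        unfolding eE_def by (rule norm_triangle_ineq4)
      ultimately show ?thesis using En_bound[OF that] by simp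
    qed
    from cmod_Aq_le[of h K eE c tE ME tN MN eN, OF less_imp_le[OF \<open>h > 0\<close>] this]
    show "cmod (Aq h K eE eN tE tN)
        \<le> 3 / 2 * (gnorm h K (\<lambda>k. complex_of_real (eN k)))\<^sup>2 + C4 * (gnorm h K eE)\<^sup>2"
      unfolding C4_def using zero_le_power2[of "gnorm h K (\<lambda>k. complex_of_real (eN k))"] by linarith
  qed
qed

end
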